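(* Every regular triangulation of $[0,1]^L$ is induced by some generic fitness landscape $w:\{0,1\}^L\to\mathbb{R}_{\ge 0}$ that has exactly one peak.
   Context: Genotypes $g\in\{0,1\}^L$ are vertices of $[0,1]^L$. The triangulation induced by $w$ is the regular subdivision of $[0,1]^L$ obtained by projecting the upper faces of $\mathrm{conv}\{(g,w_g)\}\subset\mathbb{R}^{L+1}$; a triangulation is regular if induced in this way; $w$ is generic if all $w_g$ are distinct and the induced subdivision is a triangulation. A peak is a genotype all of whose Hamming neighbours have strictly lower fitness. *)

theory Defs
  imports "HOL-Analysis.Analysis"
begin

text \<open>The cube [0,1]^L is modelled in real^'n with L = CARD('n).
  Genotypes are the 0/1 vertices. A fitness landscape is a function
  w :: real^'n => real; only its values on genotypes matter.\<close>

definition genotypes :: "(real^'n::finite) set" where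
  "genotypes = {x. \<forall>i. x $ i = 0 \<or> x $ i = 1}"

text \<open>Cells of the regular subdivision induced by w: the (nonempty) sets of
  genotypes whose lifts lie on an upper face of conv{(g, w g)}, i.e. on a
  non-vertical affine hyperplane lying weakly above all lifted points.
  Each cell is recorded by its set of (marked) genotypes.\<close>

definition induced_subdivision :: "((real^'n::finite) \<Rightarrow> real) \<Rightarrow> (real^'n) set set" where
  "induced_subdivision w =
     {S. S \<noteq> {} \<and> (\<exists>a b. (\<forall>g\<in>genotypes. w g \<le> a \<bullet> g + b) \<and>
                        S = {g\<in>genotypes. w g = a \<bullet> g + b})}"

definition is_triangulation :: "(real^'n::finite) set set \<Rightarrow> bool" where
  "is_triangulation T \<longleftrightarrow> (\<forall>S\<in>T. \<not> affine_dependent S)"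

definition regular_triangulation :: "(real^'n::finite) set set \<Rightarrow> bool" where
  "regular_triangulation T \<longleftrightarrow>
     (\<exists>w. induced_subdivision w = T) \<and> is_triangulation T"

definition generic :: "((real^'n::finite) \<Rightarrow> real) \<Rightarrow> bool" where
  "generic w \<longleftrightarrow> inj_on w genotypes \<and> is_triangulation (induced_subdivision w)"

definition hamming_neighbours :: "real^'n::finite \<Rightarrow> real^'n \<Rightarrow> bool" where
  "hamming_neighbours g h \<longleftrightarrow> card {i. g $ i \<noteq> h $ i} = 1"

definition is_peak :: "((real^'n::finite) \<Rightarrow> real) \<Rightarrow> real^'n \<Rightarrow> bool" where
  "is_peak w g \<longleftrightarrow> g \<in> genotypes \<and>
     (\<forall>h\<in>genotypes. hamming_neighbours g h \<longrightarrow> w h < w g)"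

end

theory Submission
  imports Defs
begin

text \<open>Add to a landscape w0 inducing T the linear function
  g \<mapsto> M * (\<Sum>i. 2^(r i) * g$i), with r an injection of the loci into \<nat>,
  plus a constant making it nonnegative.
  Adding an affine function does not change the induced subdivision. The
  binary weights separate any two genotypes by at least M, so if M exceeds
  the spread of w0 the new landscape is injective on genotypes and strictly
  increasing in the componentwise order; hence its only peak is the
  all-ones genotype.\<close>

lemma finite_genotypes: "finite (genotypes :: (real^'n::finite) set)"
proof -
  have "(genotypes :: (real^'n) set) \<subseteq> range (\<lambda>S. \<chi> i. if i \<in> S then 1 else (0::real))"
  proof
    fix x :: "real^'n" assume "x \<in> genotypes"
    then have "x = (\<chi> i. if i \<in> {i. x $ i = 1} then 1 else 0)"
      unfolding genotypes_def by (auto simp: vec_eq_iff)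
    then show "x \<in> range (\<lambda>S. \<chi> i. if i \<in> S then 1 else (0::real))" by blast
  qed
  then show ?thesis by (rule finite_subset) simp
qed

lemma landscape_bounded_on_genotypes:
  fixes w :: "real^'n::finite \<Rightarrow> real"
  obtains B where "0 \<le> B" and "\<And>g. g \<in> genotypes \<Longrightarrow> \<bar>w g\<bar> \<le> B"
  using finite_genotypes
  by (intro that[of "\<Sum>g\<in>genotypes. \<bar>w g\<bar>"] sum_nonneg member_le_sum) auto

lemma induced_subdivision_subset_add_affine:
  "induced_subdivision w \<subseteq> induced_subdivision (\<lambda>g. w g + a \<bullet> g + b)"
proof
  fix S assume "S \<in> induced_subdivision w"
  then obtain a' b' where "S \<noteq> {}" and above: "\<forall>g\<in>genotypes. w g \<le> a' \<bullet> g + b'"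
    and S: "S = {g\<in>genotypes. w g = a' \<bullet> g + b'}"
    unfolding induced_subdivision_def by blast
  have "\<forall>g\<in>genotypes. w g + a \<bullet> g + b \<le> (a' + a) \<bullet> g + (b' + b)"
    using above by (simp add: inner_add_left)
  moreover have "S = {g\<in>genotypes. w g + a \<bullet> g + b = (a' + a) \<bullet> g + (b' + b)}"
    unfolding S by (auto simp: inner_add_left)
  ultimately show "S \<in> induced_subdivision (\<lambda>g. w g + a \<bullet> g + b)"
    using \<open>S \<noteq> {}\<close> unfolding induced_subdivision_def by blast
qed

lemma induced_subdivision_add_affine:
  "induced_subdivision (\<lambda>g. w g + a \<bullet> g + b) = induced_subdivision w"
  using induced_subdivision_subset_add_affine[of w a b]
    induced_subdivision_subset_add_affine[of "\<lambda>g. w g + a \<bullet> g + b" "- a" "- b"]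
  by simp

lemma sum_signed_powers_of_two_neq_zero:
  fixes e :: "'a \<Rightarrow> int" and r :: "'a \<Rightarrow> nat"
  assumes "finite A" and "inj_on r A" and "\<And>i. i \<in> A \<Longrightarrow> \<bar>e i\<bar> \<le> 1"
    and "j \<in> A" and "e j \<noteq> 0"
  shows "(\<Sum>i\<in>A. e i * 2 ^ r i) \<noteq> 0"
proof
  assume sum_zero: "(\<Sum>i\<in>A. e i * 2 ^ r i) = 0"
  obtain k where k: "k \<in> A" "e k \<noteq> 0" and least: "\<And>i. i \<in> A \<Longrightarrow> e i \<noteq> 0 \<Longrightarrow> r k \<le> r i"
    using ex_has_least_nat[of "\<lambda>i. i \<in> A \<and> e i \<noteq> 0" j r] assms(4,5) by blast
  have "2 ^ Suc (r k) dvd e i * 2 ^ r i" if "i \<in> A - {k}" for i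
  proof (cases "e i = 0")
    case False
    then have "Suc (r k) \<le> r i"
      using least[of i] that k(1) \<open>inj_on r A\<close> by (fastforce simp: inj_on_def)
    then have "(2::int) ^ Suc (r k) dvd 2 ^ r i" by (rule le_imp_power_dvd)
    then show ?thesis by simp
  qed simp
  then have "2 ^ Suc (r k) dvd (\<Sum>i\<in>A - {k}. e i * 2 ^ r i)"
    by (rule dvd_sum)
  moreover have "e k * 2 ^ r k = - (\<Sum>i\<in>A - {k}. e i * 2 ^ r i)"
    using sum_zero sum.remove[OF \<open>finite A\<close> k(1), of "\<lambda>i. e i * 2 ^ r i"] by simp
  ultimately have "2 * 2 ^ r k dvd e k * 2 ^ r k" by simp
  then have "2 dvd e k" by simp
  moreover have "e k = 1 \<or> e k = - 1" using assms(3)[OF k(1)] k(2) by linarith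
  ultimately show False by auto
qed

lemma genotypes_binary_code_separated:
  fixes g h :: "real^'n::finite" and r :: "'n \<Rightarrow> nat"
  assumes "inj r" and "g \<in> genotypes" and "h \<in> genotypes" and "g \<noteq> h"
  shows "1 \<le> \<bar>\<Sum>i\<in>UNIV. 2 ^ r i * (g $ i - h $ i)\<bar>"
proof -
  define e where "e i = (if g $ i = 1 then 1 else 0) - (if h $ i = 1 then 1 else 0 :: int)" for i
  have diff: "g $ i - h $ i = of_int (e i)" for i
  proof -
    have "g $ i = 0 \<or> g $ i = 1" "h $ i = 0 \<or> h $ i = 1"
      using assms(2,3) unfolding genotypes_def by blast+
    then show ?thesis unfolding e_def by auto
  qed
  obtain j where "g $ j \<noteq> h $ j" using \<open>g \<noteq> h\<close> by (auto simp: vec_eq_iff)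
  then have "e j \<noteq> 0" using diff[of j] by auto
  then have "(\<Sum>i\<in>UNIV. e i * 2 ^ r i) \<noteq> 0"
    using \<open>inj r\<close> by (intro sum_signed_powers_of_two_neq_zero) (auto simp: e_def)
  then have "1 \<le> \<bar>\<Sum>i\<in>UNIV. e i * 2 ^ r i\<bar>" by linarith
  then have "1 \<le> \<bar>of_int (\<Sum>i\<in>UNIV. e i * 2 ^ r i) :: real\<bar>"
    by (metis of_int_1_le_iff of_int_abs)
  then show ?thesis by (simp add: diff mult.commute)
qed

lemma separating_weights_exist:
  fixes M :: real
  assumes "0 \<le> M"
  obtains a :: "real^'n::finite" where "0 \<le> a"
    and "\<And>g h. g \<in> genotypes \<Longrightarrow> h \<in> genotypes \<Longrightarrow> g \<noteq> h \<Longrightarrow> M \<le> \<bar>a \<bullet> (g - h)\<bar>"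
proof
  define a :: "real^'n" where "a = (\<chi> i. M * 2 ^ to_nat i)"
  show "0 \<le> a" using assms by (simp add: a_def less_eq_vec_def)
  fix g h :: "real^'n" assume "g \<in> genotypes" "h \<in> genotypes" "g \<noteq> h"
  with inj_to_nat have "1 \<le> \<bar>\<Sum>i\<in>UNIV. 2 ^ to_nat i * (g $ i - h $ i)\<bar>"
    by (rule genotypes_binary_code_separated)
  then have "M * 1 \<le> M * \<bar>\<Sum>i\<in>UNIV. 2 ^ to_nat i * (g $ i - h $ i)\<bar>"
    using assms by (rule mult_left_mono)
  moreover have "a \<bullet> (g - h) = M * (\<Sum>i\<in>UNIV. 2 ^ to_nat i * (g $ i - h $ i))"
    unfolding a_def inner_vec_def by (simp add: sum_distrib_left mult.assoc)
  ultimately show "M \<le> \<bar>a \<bullet> (g - h)\<bar>"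
    using assms by (simp add: abs_mult)
qed

lemma inner_nonneg_vec:
  fixes a x :: "real^'n::finite"
  assumes "0 \<le> a" and "0 \<le> x"
  shows "0 \<le> a \<bullet> x"
  using assms unfolding inner_vec_def less_eq_vec_def by (simp add: sum_nonneg)

lemma genotypes_nonneg:
  assumes "g \<in> genotypes"
  shows "0 \<le> g"
proof -
  have "g $ i = 0 \<or> g $ i = 1" for i using assms unfolding genotypes_def by blast
  then show ?thesis unfolding less_eq_vec_def zero_index by (metis order.refl zero_le_one)
qed

lemma separated_perturbation_inj_strict_mono:
  fixes w :: "real^'n::finite \<Rightarrow> real"
  assumes spread: "\<And>g h. g \<in> genotypes \<Longrightarrow> h \<in> genotypes \<Longrightarrow> \<bar>w g - w h\<bar> < M"
    and "0 \<le> a"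
    and sep: "\<And>g h. g \<in> genotypes \<Longrightarrow> h \<in> genotypes \<Longrightarrow> g \<noteq> h \<Longrightarrow> M \<le> \<bar>a \<bullet> (g - h)\<bar>"
  shows "inj_on (\<lambda>g. w g + a \<bullet> g + b) genotypes"
    and "strict_mono_on genotypes (\<lambda>g. w g + a \<bullet> g + b)"
proof -
  show "inj_on (\<lambda>g. w g + a \<bullet> g + b) genotypes"
  proof (rule inj_onI, rule ccontr)
    fix g h :: "real^'n" assume g: "g \<in> genotypes" and h: "h \<in> genotypes"
      and eq: "w g + a \<bullet> g + b = w h + a \<bullet> h + b" and "g \<noteq> h"
    then have "M \<le> \<bar>w g - w h\<bar>" using sep[OF g h] by (simp add: inner_diff_right)
    then show False using spread[OF g h] by linarith
  qed
  show "strict_mono_on genotypes (\<lambda>g. w g + a \<bullet> g + b)"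
  proof (rule strict_mono_onI)
    fix g h :: "real^'n" assume g: "g \<in> genotypes" and h: "h \<in> genotypes" and "g < h"
    then have "0 \<le> a \<bullet> (h - g)" using \<open>0 \<le> a\<close> by (intro inner_nonneg_vec) simp_all
    moreover have "M \<le> \<bar>a \<bullet> (h - g)\<bar>" using sep[OF h g] \<open>g < h\<close> by simp
    ultimately show "w g + a \<bullet> g + b < w h + a \<bullet> h + b"
      using spread[OF g h] by (simp add: inner_diff_right)
  qed
qed

lemma strict_mono_landscape_peaks:
  fixes w :: "real^'n::finite \<Rightarrow> real"
  assumes mono: "strict_mono_on genotypes w"
  shows "{g. is_peak w g} = {1}"
proof (intro equalityI subsetI)
  fix g assume "g \<in> {g. is_peak w g}"
  then have g: "g \<in> genotypes" and peak: "\<And>h. h \<in> genotypes \<Longrightarrow> hamming_neighbours g h \<Longrightarrow> w h < w g"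
    unfolding is_peak_def by auto
  show "g \<in> {1}"
  proof (rule ccontr)
    assume "g \<notin> {1}"
    then obtain i where "g $ i \<noteq> 1" by (auto simp: vec_eq_iff)
    then have gi: "g $ i = 0" using g unfolding genotypes_def by blast
    define h where "h = (\<chi> j. if j = i then 1 else g $ j)"
    have h: "h \<in> genotypes" using g unfolding h_def genotypes_def by auto
    have "{j. g $ j \<noteq> h $ j} = {i}" using gi by (auto simp: h_def)
    then have "w h < w g" using peak[OF h] unfolding hamming_neighbours_def by simp
    moreover have "g < h" using gi by (auto simp: h_def less_vec_def less_eq_vec_def)
    ultimately show False using strict_mono_onD[OF mono g h] by simp
  qed
next
  fix g assume "g \<in> {1 :: real^'n}"
  then have g: "g = 1" by simp
  have one: "1 \<in> (genotypes :: (real^'n) set)" by (simp add: genotypes_def one_vec_def)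
  have "w h < w 1" if h: "h \<in> genotypes" and "hamming_neighbours 1 h" for h
  proof -
    have "h $ i = 0 \<or> h $ i = 1" for i using h unfolding genotypes_def by blast
    then have "h \<le> 1" unfolding less_eq_vec_def one_index by (metis order.refl zero_le_one)
    moreover have "h \<noteq> 1" using \<open>hamming_neighbours 1 h\<close> by (auto simp: hamming_neighbours_def)
    ultimately show ?thesis using strict_mono_onD[OF mono h one] by simp
  qed
  then show "g \<in> {g. is_peak w g}" using g one by (simp add: is_peak_def)
qed

theorem corollary1:
  fixes T :: "(real^'n::finite) set set"
  assumes "regular_triangulation T"
  shows "\<exists>w :: real^'n \<Rightarrow> real.
           generic w \<and> (\<forall>g\<in>genotypes. 0 \<le> w g) \<and>
           induced_subdivision w = T \<and>
           card {g. is_peak w g} = 1"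
proof -
  obtain w0 :: "real^'n \<Rightarrow> real" where w0: "induced_subdivision w0 = T" and "is_triangulation T"
    using assms unfolding regular_triangulation_def by blast
  obtain B where "0 \<le> B" and bound: "\<And>g. g \<in> genotypes \<Longrightarrow> \<bar>w0 g\<bar> \<le> B"
    using landscape_bounded_on_genotypes[of w0] by blast
  then have spread: "\<bar>w0 g - w0 h\<bar> < 2 * B + 1" if "g \<in> genotypes" "h \<in> genotypes" for g h
    using bound[OF that(1)] bound[OF that(2)] by linarith
  obtain a :: "real^'n" where "0 \<le> a" and sep:
    "\<And>g h. g \<in> genotypes \<Longrightarrow> h \<in> genotypes \<Longrightarrow> g \<noteq> h \<Longrightarrow> 2 * B + 1 \<le> \<bar>a \<bullet> (g - h)\<bar>"
    using separating_weights_exist[of "2 * B + 1"] \<open>0 \<le> B\<close> by auto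
  define w where "w g = w0 g + a \<bullet> g + B" for g
  have "inj_on w genotypes" and mono: "strict_mono_on genotypes w"
    unfolding w_def using separated_perturbation_inj_strict_mono[of w0 "2 * B + 1" a] spread
      \<open>0 \<le> a\<close> sep by blast+
  then have "generic w"
    unfolding generic_def w_def induced_subdivision_add_affine w0 using \<open>is_triangulation T\<close> by simp
  moreover have "\<forall>g\<in>genotypes. 0 \<le> w g"
  proof
    fix g :: "real^'n" assume g: "g \<in> genotypes"
    have "0 \<le> a \<bullet> g" using \<open>0 \<le> a\<close> genotypes_nonneg[OF g] by (rule inner_nonneg_vec)
    then show "0 \<le> w g" using bound[OF g] unfolding w_def by linarith
  qed
  moreover have "induced_subdivision w = T"
    unfolding w_def induced_subdivision_add_affine w0 ..
  moreover have "card {g. is_peak w g} = 1"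
    using strict_mono_landscape_peaks[OF mono] by simp
  ultimately show ?thesis by blast
qed

end
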